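(* Define $\tau:\mathbb N\to\mathbb N$ by $$\tau(n)=\begin{cases}\lfloor\varphi n+1\rfloor, & n\in R_{2,0},\\ \lfloor\varphi n-1\rfloor, & n\in R_{1,0},\\ \lfloor(\varphi-1) n+1\rfloor, & n\in R_{1,1}.\end{cases}$$ Then $\tau$ is an $R_{i,j}$-permutation of $\mathbb N$ (first values $1,2,5,3,7,4,10,13,6,15,\dots$), and its inverse is the $R_{i,j}$-permutation $$\tau^{-1}(n)=\begin{cases}\lfloor\varphi n\rfloor, & n\in R_{2,0}\cup R_{1,1},\\ \lfloor(\varphi-1) n+1\rfloor, & n\in R_{2,1},\\ \lfloor(\varphi-1) n\rfloor, & n\in R_{3,0}.\end{cases}$$
   Context: $\mathbb N=\{1,2,\dots\}$, $\varphi=\frac{1+\sqrt5}{2}$, $F$ the Fibonacci numbers ($F(0)=0,F(1)=F(2)=1$). For $i\in\mathbb Z^{\ge0},j\in\mathbb Z$, $R_{i,j}$ is the range of $n\mapsto F(i+1)\lfloor n\varphi\rfloor+F(i)n-j$, $n\in\mathbb N$. An $R_{i,j}$-permutation is a permutation $\pi$ of $\mathbb N$ defined piecewise on a finite partition of $\mathbb N$ into sets $R_{i,j}$, with $\pi(n)=\lfloor(a\varphi+b)n+c\rfloor$ on each piece for integers $a,b,c$ depending on the piece. *)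

theory Defs
  imports Complex_Main "HOL-Number_Theory.Fib"
begin

definition phi :: real where "phi = (1 + sqrt 5) / 2"

definition R :: "nat \<Rightarrow> int \<Rightarrow> nat set" where
  "R i j = {m. \<exists>n::nat. n \<ge> 1 \<and>
     int m = int (fib (i+1)) * \<lfloor>real n * phi\<rfloor> + int (fib i) * int n - j}"

text \<open>A piece (i, j, a, b, c): on R i j the map is n \<mapsto> floor((a phi + b) n + c).\<close>
definition Rperm_pieces :: "(nat \<times> int \<times> int \<times> int \<times> int) list \<Rightarrow> (nat \<Rightarrow> nat) \<Rightarrow> bool" where
  "Rperm_pieces ps \<pi> \<longleftrightarrow>
     bij_betw \<pi> {1..} {1..} \<and>
     (\<Union>(i,j,a,b,c)\<in>set ps. R i j) = {1..} \<and>
     (\<forall>k<length ps. \<forall>l<length ps. k \<noteq> l \<longrightarrow>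
        (case ps!k of (i,j,_,_,_) \<Rightarrow> R i j) \<inter> (case ps!l of (i,j,_,_,_) \<Rightarrow> R i j) = {}) \<and>
     (\<forall>(i,j,a,b,c)\<in>set ps. \<forall>n\<in>R i j.
        int (\<pi> n) = \<lfloor>(of_int a * phi + of_int b) * real n + of_int c\<rfloor>)"

definition Rperm :: "(nat \<Rightarrow> nat) \<Rightarrow> bool" where
  "Rperm \<pi> \<longleftrightarrow> (\<exists>ps. Rperm_pieces ps \<pi>)"

definition tau :: "nat \<Rightarrow> nat" where
  "tau n = (if n \<in> R 2 0 then nat \<lfloor>phi * real n + 1\<rfloor>
            else if n \<in> R 1 0 then nat \<lfloor>phi * real n - 1\<rfloor>
            else if n \<in> R 1 1 then nat \<lfloor>(phi - 1) * real n + 1\<rfloor>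
            else 0)"

definition tau_inv :: "nat \<Rightarrow> nat" where
  "tau_inv n = (if n \<in> R 2 0 \<union> R 1 1 then nat \<lfloor>phi * real n\<rfloor>
            else if n \<in> R 2 1 then nat \<lfloor>(phi - 1) * real n + 1\<rfloor>
            else if n \<in> R 3 0 then nat \<lfloor>(phi - 1) * real n\<rfloor>
            else 0)"

end

theory Submission
  imports Defs "HOL-Computational_Algebra.Primes"
begin

text \<open>
  Write A n = floor (n phi) and B n = A n + n = floor (n phi^2) for the lower and upper Wythoff
  sequences. As phi is irrational and 1/phi + 1/phi^2 = 1, Beatty's theorem says that the ranges
  of A and B partition the positive integers. By the Wythoff identities A (A n) = B n - 1 and
  A (B n) = A n + B n, the sets R i j occurring here are the ranges of B, A o A, A o B, B o A and
  B o B. So the positive integers split both as range (A o A) + range (A o B) + range B and as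
  range A + range (B o A) + range (B o B), and tau maps the first splitting onto the second piece
  by piece: A (A k) to A k, A (B k) to B (B k) and B k to B (A k). The floor formulas defining
  tau and tau_inv are these maps rewritten by the same identities.
\<close>

section \<open>Beatty sequences\<close>

definition beatty :: "real \<Rightarrow> nat \<Rightarrow> nat" where
  "beatty \<alpha> n = nat \<lfloor>real n * \<alpha>\<rfloor>"

lemma beatty_eq_iff:
  assumes "\<alpha> \<ge> 0"
  shows "beatty \<alpha> n = m \<longleftrightarrow> real m \<le> real n * \<alpha> \<and> real n * \<alpha> < real m + 1"
  using assms by (simp add: beatty_def nat_eq_iff floor_eq_iff)

lemma int_beatty: "\<alpha> \<ge> 0 \<Longrightarrow> int (beatty \<alpha> n) = \<lfloor>real n * \<alpha>\<rfloor>"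
  by (simp add: beatty_def)

lemma beatty_add_one: "\<alpha> \<ge> 0 \<Longrightarrow> beatty (\<alpha> + 1) n = beatty \<alpha> n + n"
  by (simp add: beatty_def distrib_left nat_add_distrib)

lemma beatty_ge_self: "\<alpha> \<ge> 1 \<Longrightarrow> n \<le> beatty \<alpha> n"
  by (simp add: beatty_def le_nat_floor mult_le_cancel_left1)

lemma beatty_image_subset: "\<alpha> \<ge> 1 \<Longrightarrow> beatty \<alpha> ` {1..} \<subseteq> {1..}"
  using beatty_ge_self by (fastforce intro: order_trans)

lemma strict_mono_beatty: "\<alpha> \<ge> 1 \<Longrightarrow> strict_mono (beatty \<alpha>)"
  unfolding strict_mono_Suc_iff
proof
  fix n assume "\<alpha> \<ge> 1"
  then have "real n * \<alpha> + 1 \<le> real (Suc n) * \<alpha>" by (simp add: algebra_simps)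
  then have "\<lfloor>real n * \<alpha>\<rfloor> + 1 \<le> \<lfloor>real (Suc n) * \<alpha>\<rfloor>"
    using floor_mono by fastforce
  then have "int (beatty \<alpha> n) < int (beatty \<alpha> (Suc n))"
    using \<open>\<alpha> \<ge> 1\<close> by (simp add: int_beatty)
  then show "beatty \<alpha> n < beatty \<alpha> (Suc n)" by simp
qed

lemma rational_divide_irrational_not_Rats:
  assumes "\<alpha> \<notin> \<rat>" "q \<in> \<rat>" "q \<noteq> 0"
  shows "q / \<alpha> \<notin> \<rat>"
proof
  assume quotient: "q / \<alpha> \<in> \<rat>"
  have "\<alpha> \<noteq> 0" using assms(1) by auto
  then have "\<alpha> = q / (q / \<alpha>)" using assms(3) by simp
  also have "\<dots> \<in> \<rat>" using assms(2) quotient by (rule Rats_divide)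
  finally show False using assms(1) by simp
qed

lemma of_nat_mult_irrational_not_Ints:
  assumes "\<alpha> \<notin> \<rat>" "m \<ge> 1"
  shows "real m * \<alpha> \<notin> \<int>"
proof
  assume "real m * \<alpha> \<in> \<int>"
  then have "real m * \<alpha> / real m \<in> \<rat>" using Ints_subset_Rats by (intro Rats_divide) auto
  with assms show False by simp
qed

lemma of_nat_divide_irrational_not_Ints:
  assumes "\<alpha> \<notin> \<rat>" "m \<ge> 1"
  shows "real m / \<alpha> \<notin> \<int>"
  using rational_divide_irrational_not_Rats[OF assms(1), of "real m"] assms(2) Ints_subset_Rats by auto

lemma mem_beatty_image_iff:
  assumes "\<alpha> > 1" "\<alpha> \<notin> \<rat>" "m \<ge> 1"
  shows "m \<in> beatty \<alpha> ` {1..} \<longleftrightarrow> 1 - 1 / \<alpha> < frac (real m / \<alpha>)"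
proof -
  txt \<open>\<open>beatty \<alpha> n = m\<close> means that \<open>n\<close> lies in \<open>[m/\<alpha>, (m+1)/\<alpha>)\<close>, an interval of length
    less than 1 with irrational left end, so the only candidate is \<open>n = \<lfloor>m/\<alpha>\<rfloor> + 1\<close>.\<close>
  define x where "x = real m / \<alpha>"
  have "x \<notin> \<int>" unfolding x_def using assms by (intro of_nat_divide_irrational_not_Ints)
  have "x > 0" using assms by (simp add: x_def)
  have beatty_iff: "beatty \<alpha> n = m \<longleftrightarrow> x \<le> real n \<and> real n < x + 1 / \<alpha>" for n
    using assms by (simp add: beatty_eq_iff x_def field_simps)
  have "beatty \<alpha> 0 \<noteq> m" using assms(3) by (simp add: beatty_def)
  then have "m \<in> beatty \<alpha> ` {1..} \<longleftrightarrow> (\<exists>n. beatty \<alpha> n = m)"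
    by (metis atLeast_iff image_iff less_one linorder_not_le)
  also have "\<dots> \<longleftrightarrow> 1 - 1 / \<alpha> < frac x"
  proof
    assume "\<exists>n. beatty \<alpha> n = m"
    then obtain n where "x \<le> real n" "real n < x + 1 / \<alpha>" using beatty_iff by blast
    moreover have "x \<noteq> real n" using \<open>x \<notin> \<int>\<close> by auto
    moreover have "1 / \<alpha> < 1" using assms by simp
    ultimately have "x < real n" "real n - 1 \<le> x" by linarith+
    then have "\<lfloor>x\<rfloor> < int n" "int n - 1 \<le> \<lfloor>x\<rfloor>"
      by (simp_all add: floor_less_iff le_floor_iff)
    then have "real n = real_of_int \<lfloor>x\<rfloor> + 1" by linarith
    with \<open>real n < x + 1 / \<alpha>\<close> show "1 - 1 / \<alpha> < frac x" by (simp add: frac_def)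
  next
    assume "1 - 1 / \<alpha> < frac x"
    have "beatty \<alpha> (nat (\<lfloor>x\<rfloor> + 1)) = m"
      using \<open>1 - 1 / \<alpha> < frac x\<close> \<open>x > 0\<close> unfolding beatty_iff frac_def by simp
    then show "\<exists>n. beatty \<alpha> n = m" ..
  qed
  finally show ?thesis by (simp add: x_def)
qed

theorem beatty_complement:
  assumes "\<alpha> > 1" "\<alpha> \<notin> \<rat>" and conjugate: "1 / \<alpha> + 1 / \<beta> = 1"
  shows "beatty \<beta> ` {1..} = {1..} - beatty \<alpha> ` {1..}"
proof -
  have inverse_beta: "1 / \<beta> = 1 - 1 / \<alpha>" using conjugate by simp
  then have "0 < 1 / \<beta>" "1 / \<beta> < 1" using assms(1) by simp_all
  then have "\<beta> > 1" by (simp add: divide_less_eq_1 zero_less_divide_1_iff)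
  have "\<beta> \<notin> \<rat>"
  proof
    assume "\<beta> \<in> \<rat>"
    then have "1 / (1 - 1 / \<beta>) \<in> \<rat>" by simp
    with inverse_beta assms(1,2) show False by simp
  qed
  have "m \<in> beatty \<beta> ` {1..} \<longleftrightarrow> m \<notin> beatty \<alpha> ` {1..}" if "m \<ge> 1" for m
  proof -
    define x where "x = real m / \<alpha>"
    have "x \<notin> \<int>" unfolding x_def using assms that by (intro of_nat_divide_irrational_not_Ints)
    have "real m / \<beta> = real m * (1 / \<beta>)" by simp
    also have "\<dots> = of_int (int m) + - x" by (simp add: inverse_beta x_def algebra_simps)
    finally have "real m / \<beta> = of_int (int m) + - x" .
    then have frac_beta: "frac (real m / \<beta>) = 1 - frac x"
      using \<open>x \<notin> \<int>\<close> by (simp only: frac_add_of_int_left frac_neg) simp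
    txt \<open>Hence the criteria of \<open>mem_beatty_image_iff\<close> for \<open>\<alpha>\<close> and \<open>\<beta>\<close> are complementary
      unless \<open>frac x = 1 - 1/\<alpha>\<close>, which would make \<open>(m+1)/\<alpha>\<close> an integer.\<close>
    have "frac x \<noteq> 1 - 1 / \<alpha>"
    proof
      assume "frac x = 1 - 1 / \<alpha>"
      then have "real (m + 1) / \<alpha> = of_int (\<lfloor>x\<rfloor> + 1)" by (simp add: x_def frac_def add_divide_distrib)
      then show False using of_nat_divide_irrational_not_Ints[OF assms(2), of "m + 1"] by simp
    qed
    then show ?thesis
      using mem_beatty_image_iff[OF assms(1,2) that] mem_beatty_image_iff[OF \<open>\<beta> > 1\<close> \<open>\<beta> \<notin> \<rat>\<close> that]
      by (simp add: frac_beta inverse_beta x_def) linarith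
  qed
  moreover have "beatty \<beta> ` {1..} \<subseteq> {1..}" using \<open>\<beta> > 1\<close> by (intro beatty_image_subset) simp
  ultimately show ?thesis by blast
qed

lemma sqrt_prime_irrational:
  assumes "prime (p::nat)"
  shows "sqrt (real p) \<notin> \<rat>"
proof
  assume "sqrt (real p) \<in> \<rat>"
  then obtain m n :: nat
    where "n \<noteq> 0" and sqrt_eq: "\<bar>sqrt (real p)\<bar> = m / n" and "coprime m n"
    by (rule Rats_abs_nat_div_natE)
  have "real m = sqrt (real p) * real n"
    using \<open>n \<noteq> 0\<close> sqrt_eq by (simp add: field_simps)
  then have "real (m\<^sup>2) = real (p * n\<^sup>2)" by (simp add: power_mult_distrib)
  then have m_sq: "m\<^sup>2 = p * n\<^sup>2" by (simp only: of_nat_eq_iff)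
  then have "p dvd m" using assms prime_dvd_power by (metis dvd_triv_left)
  then obtain k where "m = p * k" ..
  with m_sq have "n\<^sup>2 = p * k\<^sup>2" using assms by (simp add: power2_eq_square mult_ac prime_gt_0_nat)
  then have "p dvd n" using assms prime_dvd_power by (metis dvd_triv_left)
  with \<open>p dvd m\<close> \<open>coprime m n\<close> assms show False
    using coprime_common_divisor not_prime_unit by blast
qed

lemma phi_irrational: "phi \<notin> \<rat>"
proof
  assume "phi \<in> \<rat>"
  moreover have "sqrt (real (5::nat)) = 2 * phi - 1" by (simp add: phi_def field_simps)
  ultimately have "sqrt (real (5::nat)) \<in> \<rat>" by simp
  moreover have "prime (5::nat)"
  proof -
    have "{2..<5::nat} = {2, 3, 4}" by auto
    then show ?thesis by (simp add: prime_nat_iff')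
  qed
  ultimately show False using sqrt_prime_irrational by blast
qed

lemma phi_squared: "phi\<^sup>2 = phi + 1"
  by (simp add: phi_def power2_eq_square field_simps)

lemma phi_bounds: "1.6 < phi" "phi < 1.65"
proof -
  have "2.2 < sqrt (5::real)" by (rule real_less_rsqrt) (simp add: power2_eq_square)
  moreover have "sqrt (5::real) < 2.3" by (rule real_less_lsqrt) (simp_all add: power2_eq_square)
  ultimately show "1.6 < phi" "phi < 1.65" by (simp_all add: phi_def)
qed

lemma phi_beatty_pair: "1 / phi + 1 / (phi + 1) = 1"
proof -
  have "phi * phi = phi + 1" using phi_squared by (simp add: power2_eq_square)
  with phi_bounds show ?thesis by (simp add: field_simps)
qed

section \<open>Wythoff sequences\<close>

abbreviation lower_wythoff :: "nat \<Rightarrow> nat" where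
  "lower_wythoff \<equiv> beatty phi"

abbreviation upper_wythoff :: "nat \<Rightarrow> nat" where
  "upper_wythoff \<equiv> beatty (phi + 1)"

lemma upper_wythoff_eq: "upper_wythoff n = lower_wythoff n + n"
  using phi_bounds by (simp add: beatty_add_one)

lemma int_lower_wythoff: "int (lower_wythoff n) = \<lfloor>real n * phi\<rfloor>"
  using phi_bounds by (simp add: int_beatty)

lemma floor_phi_times: "\<lfloor>phi * real n\<rfloor> = int (lower_wythoff n)"
  by (simp add: int_lower_wythoff mult.commute)

lemma of_nat_lower_wythoff: "real (lower_wythoff n) = real n * phi - frac (real n * phi)"
  unfolding frac_def int_lower_wythoff[symmetric] by simp

lemma floor_phi_minus_one_times: "\<lfloor>(phi - 1) * real n\<rfloor> = int (lower_wythoff n) - int n"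
proof -
  have "(phi - 1) * real n = phi * real n - of_int (int n)" by (simp add: algebra_simps)
  then show ?thesis by (simp only: floor_diff_of_int floor_phi_times)
qed

lemma lower_wythoff_ge: "n \<le> lower_wythoff n"
  using phi_bounds by (intro beatty_ge_self) simp

lemma lower_wythoff_pos: "n \<ge> 1 \<Longrightarrow> lower_wythoff n \<ge> 1"
  using lower_wythoff_ge[of n] by simp

lemma upper_wythoff_pos: "n \<ge> 1 \<Longrightarrow> upper_wythoff n \<ge> 1"
  by (simp add: upper_wythoff_eq)

lemma lower_wythoff_image_subset: "lower_wythoff ` {1..} \<subseteq> {1..}"
  using phi_bounds by (intro beatty_image_subset) simp

lemma upper_wythoff_image_subset: "upper_wythoff ` {1..} \<subseteq> {1..}"
  using phi_bounds by (intro beatty_image_subset) simp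

lemma inj_lower_wythoff: "inj lower_wythoff"
  using phi_bounds by (intro strict_mono_imp_inj_on strict_mono_beatty) simp

lemma inj_upper_wythoff: "inj upper_wythoff"
  using phi_bounds by (intro strict_mono_imp_inj_on strict_mono_beatty) simp

lemma upper_wythoff_image_eq: "upper_wythoff ` {1..} = {1..} - lower_wythoff ` {1..}"
  using phi_bounds phi_irrational phi_beatty_pair
  by (intro beatty_complement) simp_all

lemma lower_upper_wythoff_disjoint: "lower_wythoff ` {1..} \<inter> upper_wythoff ` {1..} = {}"
  using upper_wythoff_image_eq by blast

lemma lower_upper_wythoff_cover: "lower_wythoff ` {1..} \<union> upper_wythoff ` {1..} = {1..}"
  using upper_wythoff_image_eq lower_wythoff_image_subset by blast

lemma lower_wythoff_times_phi:
  "real (lower_wythoff n) * phi = real (upper_wythoff n) - frac (real n * phi) * (phi - 1)"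
proof -
  define f where "f = frac (real n * phi)"
  have "real (lower_wythoff n) * phi = real n * (phi * phi) - f * phi"
    unfolding of_nat_lower_wythoff f_def by (simp add: left_diff_distrib mult.assoc)
  also have "\<dots> = real n * (phi + 1) - f * phi" using phi_squared by (simp add: power2_eq_square)
  also have "\<dots> = real (upper_wythoff n) - f * (phi - 1)"
    unfolding upper_wythoff_eq of_nat_add of_nat_lower_wythoff f_def by (simp add: algebra_simps)
  finally show ?thesis unfolding f_def .
qed

lemma lower_wythoff_lower_wythoff:
  assumes "n \<ge> 1"
  shows "lower_wythoff (lower_wythoff n) + 1 = upper_wythoff n"
proof -
  define f where "f = frac (real n * phi)"
  have "0 < f" "f < 1"
    using of_nat_mult_irrational_not_Ints[OF phi_irrational assms] by (simp_all add: f_def frac_lt_1)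
  then have "0 < f * (phi - 1)" "f * (phi - 1) < 1"
    using phi_bounds mult_strict_mono[of f 1 "phi - 1" 1] by simp_all
  then have "\<lfloor>real (lower_wythoff n) * phi\<rfloor> = int (upper_wythoff n) - 1"
    unfolding lower_wythoff_times_phi f_def[symmetric] by (intro floor_unique) simp_all
  then show ?thesis using int_lower_wythoff[of "lower_wythoff n"] by simp
qed

lemma int_lower_wythoff_lower_wythoff:
  "n \<ge> 1 \<Longrightarrow> int (lower_wythoff (lower_wythoff n)) = int (lower_wythoff n) + int n - 1"
  using arg_cong[OF lower_wythoff_lower_wythoff, of n int] by (simp add: upper_wythoff_eq)

lemma lower_wythoff_upper_wythoff:
  "lower_wythoff (upper_wythoff n) = lower_wythoff n + upper_wythoff n"
proof -
  define f where "f = frac (real n * phi)"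
  have "0 \<le> f" "f < 1" by (simp_all add: f_def frac_lt_1)
  then have bounds: "0 \<le> f * (2 - phi)" "f * (2 - phi) < 1"
    using phi_bounds mult_strict_mono[of f 1 "2 - phi" 1] by simp_all
  have "real (upper_wythoff n) * phi = real (lower_wythoff n) * phi + real n * phi"
    by (simp add: upper_wythoff_eq algebra_simps)
  then have "real (upper_wythoff n) * phi
      = real (lower_wythoff n) + real (upper_wythoff n) + f * (2 - phi)"
    using lower_wythoff_times_phi[of n] of_nat_lower_wythoff[of n] by (simp add: f_def algebra_simps)
  with bounds have "\<lfloor>real (upper_wythoff n) * phi\<rfloor> = int (lower_wythoff n + upper_wythoff n)"
    by (intro floor_unique) simp_all
  then show ?thesis using int_lower_wythoff[of "upper_wythoff n"] by simp
qed

section \<open>The sets \<open>R i j\<close> as compositions of Wythoff sequences\<close>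

lemma R_eq_image:
  assumes "\<And>n. n \<ge> 1 \<Longrightarrow>
    int (fib (i + 1)) * int (lower_wythoff n) + int (fib i) * int n - j = int (g n)"
  shows "R i j = g ` {1..}"
  using assms unfolding R_def int_lower_wythoff[symmetric] by auto

lemma R_1_0: "R 1 0 = upper_wythoff ` {1..}"
  by (rule R_eq_image) (simp add: upper_wythoff_eq)

lemma R_1_1: "R 1 1 = lower_wythoff ` lower_wythoff ` {1..}"
  unfolding image_image by (rule R_eq_image) (simp add: int_lower_wythoff_lower_wythoff)

lemma R_2_0: "R 2 0 = lower_wythoff ` upper_wythoff ` {1..}"
  unfolding image_image
  by (rule R_eq_image) (simp only: lower_wythoff_upper_wythoff, simp add: upper_wythoff_eq numeral_eq_Suc)

lemma R_2_1: "R 2 1 = upper_wythoff ` lower_wythoff ` {1..}"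
  unfolding image_image
proof (rule R_eq_image)
  fix n :: nat
  assume "n \<ge> 1"
  have "upper_wythoff (lower_wythoff n) = lower_wythoff (lower_wythoff n) + lower_wythoff n"
    by (rule upper_wythoff_eq)
  with \<open>n \<ge> 1\<close> show "int (fib (2 + 1)) * int (lower_wythoff n) + int (fib 2) * int n - 1
      = int (upper_wythoff (lower_wythoff n))"
    by (simp add: int_lower_wythoff_lower_wythoff numeral_eq_Suc)
qed

lemma R_3_0: "R 3 0 = upper_wythoff ` upper_wythoff ` {1..}"
  unfolding image_image
proof (rule R_eq_image)
  fix n :: nat
  have "upper_wythoff (upper_wythoff n) = lower_wythoff n + 2 * upper_wythoff n"
    by (simp only: upper_wythoff_eq[of "upper_wythoff n"] lower_wythoff_upper_wythoff)
  then show "int (fib (3 + 1)) * int (lower_wythoff n) + int (fib 3) * int n - 0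
      = int (upper_wythoff (upper_wythoff n))"
    by (simp add: upper_wythoff_eq numeral_eq_Suc)
qed

lemma R_2_0_Un_R_1_1: "R 2 0 \<union> R 1 1 = lower_wythoff ` {1..}"
  unfolding R_2_0 R_1_1 image_Un[symmetric] Un_commute[of "upper_wythoff ` _"]
    lower_upper_wythoff_cover ..

lemma R_2_1_Un_R_3_0: "R 2 1 \<union> R 3 0 = upper_wythoff ` {1..}"
  unfolding R_2_1 R_3_0 image_Un[symmetric] lower_upper_wythoff_cover ..

lemma R_2_0_Int_R_1_1: "R 2 0 \<inter> R 1 1 = {}"
  unfolding R_2_0 R_1_1 image_Int[OF inj_lower_wythoff, symmetric]
    Int_commute[of "upper_wythoff ` _"] lower_upper_wythoff_disjoint
  by simp

lemma R_2_1_Int_R_3_0: "R 2 1 \<inter> R 3 0 = {}"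
  unfolding R_2_1 R_3_0 image_Int[OF inj_upper_wythoff, symmetric] lower_upper_wythoff_disjoint
  by simp

lemma tau_on_R_2_0: "n \<in> R 2 0 \<Longrightarrow> int (tau n) = \<lfloor>phi * real n + 1\<rfloor>"
  by (simp add: tau_def floor_phi_times flip: one_add_floor)

lemma tau_on_R_1_0:
  assumes "n \<in> R 1 0"
  shows "int (tau n) = \<lfloor>phi * real n - 1\<rfloor>"
proof -
  have "n \<notin> R 2 0" "n \<ge> 1"
    using assms R_2_0_Un_R_1_1 lower_upper_wythoff_disjoint upper_wythoff_image_subset
    unfolding R_1_0 by blast+
  then show ?thesis
    using assms lower_wythoff_ge[of n] by (simp add: tau_def floor_phi_times)
qed

lemma tau_on_R_1_1:
  assumes "n \<in> R 1 1"
  shows "int (tau n) = \<lfloor>(phi - 1) * real n + 1\<rfloor>"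
proof -
  have "n \<notin> R 2 0" "n \<notin> R 1 0"
    using assms R_2_0_Int_R_1_1 R_2_0_Un_R_1_1 lower_upper_wythoff_disjoint
    unfolding R_1_0 by blast+
  then show ?thesis
    using assms lower_wythoff_ge[of n] by (simp add: tau_def floor_phi_minus_one_times flip: one_add_floor)
qed

lemma tau_inv_on_R_2_0_Un_R_1_1: "n \<in> R 2 0 \<union> R 1 1 \<Longrightarrow> int (tau_inv n) = \<lfloor>phi * real n\<rfloor>"
  by (simp add: tau_inv_def floor_phi_times)

lemma tau_inv_on_R_2_1:
  assumes "n \<in> R 2 1"
  shows "int (tau_inv n) = \<lfloor>(phi - 1) * real n + 1\<rfloor>"
proof -
  have "n \<notin> R 2 0 \<union> R 1 1"
    using assms R_2_0_Un_R_1_1 R_2_1_Un_R_3_0 lower_upper_wythoff_disjoint by blast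
  then show ?thesis
    using assms lower_wythoff_ge[of n]
    by (simp add: tau_inv_def floor_phi_minus_one_times flip: one_add_floor)
qed

lemma tau_inv_on_R_3_0:
  assumes "n \<in> R 3 0"
  shows "int (tau_inv n) = \<lfloor>(phi - 1) * real n\<rfloor>"
proof -
  have "n \<notin> R 2 0 \<union> R 1 1" "n \<notin> R 2 1"
    using assms R_2_0_Un_R_1_1 R_2_1_Un_R_3_0 R_2_1_Int_R_3_0 lower_upper_wythoff_disjoint by blast+
  then show ?thesis
    using assms lower_wythoff_ge[of n] by (simp add: tau_inv_def floor_phi_minus_one_times)
qed

lemma tau_lower_upper:
  assumes "k \<ge> 1"
  shows "tau (lower_wythoff (upper_wythoff k)) = upper_wythoff (upper_wythoff k)"
proof -
  have "lower_wythoff (upper_wythoff k) \<in> R 2 0" unfolding R_2_0 using assms by blast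
  then have "int (tau (lower_wythoff (upper_wythoff k)))
      = int (lower_wythoff (lower_wythoff (upper_wythoff k))) + 1"
    using tau_on_R_2_0 by (simp add: floor_phi_times flip: one_add_floor)
  also have "\<dots> = int (upper_wythoff (upper_wythoff k))"
    using assms lower_wythoff_lower_wythoff[of "upper_wythoff k"] by (simp add: upper_wythoff_eq)
  finally show ?thesis by simp
qed

lemma tau_upper:
  assumes "k \<ge> 1"
  shows "tau (upper_wythoff k) = upper_wythoff (lower_wythoff k)"
proof -
  have "upper_wythoff k \<in> R 1 0" unfolding R_1_0 using assms by blast
  then have "int (tau (upper_wythoff k)) = int (lower_wythoff (upper_wythoff k)) - 1"
    using tau_on_R_1_0 by (simp add: floor_phi_times)
  also have "\<dots> = int (upper_wythoff (lower_wythoff k))"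
    using lower_wythoff_upper_wythoff[of k] lower_wythoff_lower_wythoff[OF assms]
      upper_wythoff_eq[of "lower_wythoff k"] by simp
  finally show ?thesis by simp
qed

lemma tau_lower_lower:
  assumes "k \<ge> 1"
  shows "tau (lower_wythoff (lower_wythoff k)) = lower_wythoff k"
proof -
  have "lower_wythoff k \<ge> 1" using assms by (rule lower_wythoff_pos)
  have "lower_wythoff (lower_wythoff k) \<in> R 1 1" unfolding R_1_1 using assms by blast
  then have "int (tau (lower_wythoff (lower_wythoff k)))
      = int (lower_wythoff (lower_wythoff (lower_wythoff k))) - int (lower_wythoff (lower_wythoff k)) + 1"
    using tau_on_R_1_1 by (simp add: floor_phi_minus_one_times flip: one_add_floor)
  also have "\<dots> = int (lower_wythoff k)"
    using lower_wythoff_lower_wythoff[OF \<open>lower_wythoff k \<ge> 1\<close>]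
      upper_wythoff_eq[of "lower_wythoff k"] by simp
  finally show ?thesis by simp
qed

lemma tau_inv_lower:
  assumes "k \<ge> 1"
  shows "tau_inv (lower_wythoff k) = lower_wythoff (lower_wythoff k)"
proof -
  have "lower_wythoff k \<in> R 2 0 \<union> R 1 1" unfolding R_2_0_Un_R_1_1 using assms by blast
  then show ?thesis using tau_inv_on_R_2_0_Un_R_1_1 by (simp add: floor_phi_times)
qed

lemma tau_inv_upper_lower:
  assumes "k \<ge> 1"
  shows "tau_inv (upper_wythoff (lower_wythoff k)) = upper_wythoff k"
proof -
  have "upper_wythoff (lower_wythoff k) \<in> R 2 1" unfolding R_2_1 using assms by blast
  then have "int (tau_inv (upper_wythoff (lower_wythoff k)))
      = int (lower_wythoff (upper_wythoff (lower_wythoff k))) - int (upper_wythoff (lower_wythoff k)) + 1"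
    using tau_inv_on_R_2_1 by (simp add: floor_phi_minus_one_times flip: one_add_floor)
  also have "\<dots> = int (upper_wythoff k)"
    using lower_wythoff_upper_wythoff[of "lower_wythoff k"] lower_wythoff_lower_wythoff[OF assms]
    by simp
  finally show ?thesis by simp
qed

lemma tau_inv_upper_upper:
  assumes "k \<ge> 1"
  shows "tau_inv (upper_wythoff (upper_wythoff k)) = lower_wythoff (upper_wythoff k)"
proof -
  have "upper_wythoff (upper_wythoff k) \<in> R 3 0" unfolding R_3_0 using assms by blast
  then have "int (tau_inv (upper_wythoff (upper_wythoff k)))
      = int (lower_wythoff (upper_wythoff (upper_wythoff k))) - int (upper_wythoff (upper_wythoff k))"
    using tau_inv_on_R_3_0 by (simp add: floor_phi_minus_one_times)
  also have "\<dots> = int (lower_wythoff (upper_wythoff k))"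
    using lower_wythoff_upper_wythoff[of "upper_wythoff k"] by simp
  finally show ?thesis by simp
qed

lemma wythoff_cases:
  assumes "n \<ge> 1"
  obtains k where "k \<ge> 1" "n = lower_wythoff k" | k where "k \<ge> 1" "n = upper_wythoff k"
  using assms lower_upper_wythoff_cover by (metis UnE atLeast_iff imageE)

lemma tau_domain_cases:
  assumes "n \<ge> 1"
  obtains k where "k \<ge> 1" "n = lower_wythoff (upper_wythoff k)"
    | k where "k \<ge> 1" "n = upper_wythoff k"
    | k where "k \<ge> 1" "n = lower_wythoff (lower_wythoff k)"
  using assms
proof (cases rule: wythoff_cases)
  case (1 k)
  from \<open>k \<ge> 1\<close> show ?thesis
    by (cases rule: wythoff_cases) (use 1 that in blast)+
qed (use that in blast)

lemma tau_inv_domain_cases: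
  assumes "n \<ge> 1"
  obtains k where "k \<ge> 1" "n = lower_wythoff k"
    | k where "k \<ge> 1" "n = upper_wythoff (lower_wythoff k)"
    | k where "k \<ge> 1" "n = upper_wythoff (upper_wythoff k)"
  using assms
proof (cases rule: wythoff_cases)
  case (2 k)
  from \<open>k \<ge> 1\<close> show ?thesis
    by (cases rule: wythoff_cases) (use 2 that in blast)+
qed (use that in blast)

lemma tau_inverse:
  assumes "n \<ge> 1"
  shows "tau n \<ge> 1 \<and> tau_inv (tau n) = n"
  using assms
proof (cases rule: tau_domain_cases)
  case (1 k)
  then show ?thesis
    using upper_wythoff_pos[OF upper_wythoff_pos] by (simp add: tau_lower_upper tau_inv_upper_upper)
next
  case (2 k)
  then show ?thesis
    using upper_wythoff_pos[OF lower_wythoff_pos] by (simp add: tau_upper tau_inv_upper_lower)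
next
  case (3 k)
  then show ?thesis using lower_wythoff_pos by (simp add: tau_lower_lower tau_inv_lower)
qed

lemma tau_inv_inverse:
  assumes "n \<ge> 1"
  shows "tau_inv n \<ge> 1 \<and> tau (tau_inv n) = n"
  using assms
proof (cases rule: tau_inv_domain_cases)
  case (1 k)
  then show ?thesis
    using lower_wythoff_pos[OF lower_wythoff_pos] by (simp add: tau_inv_lower tau_lower_lower)
next
  case (2 k)
  then show ?thesis using upper_wythoff_pos by (simp add: tau_inv_upper_lower tau_upper)
next
  case (3 k)
  then show ?thesis
    using lower_wythoff_pos[OF upper_wythoff_pos] by (simp add: tau_inv_upper_upper tau_lower_upper)
qed

lemma bij_betw_tau: "bij_betw tau {1..} {1..}"
  using tau_inverse tau_inv_inverse by (intro bij_betw_byWitness[where f' = tau_inv]) auto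

lemma bij_betw_tau_inv: "bij_betw tau_inv {1..} {1..}"
  using tau_inverse tau_inv_inverse by (intro bij_betw_byWitness[where f' = tau]) auto

lemma Rperm_tau: "Rperm tau"
proof -
  have cover: "R 2 0 \<union> (R 1 0 \<union> R 1 1) = {1..}"
    using lower_upper_wythoff_cover unfolding R_2_0_Un_R_1_1[symmetric] R_1_0[symmetric] by blast
  have disjoint: "R 2 0 \<inter> R 1 0 = {}" "R 2 0 \<inter> R 1 1 = {}" "R 1 0 \<inter> R 1 1 = {}"
    using R_2_0_Un_R_1_1 R_2_0_Int_R_1_1 R_1_0 lower_upper_wythoff_disjoint by blast+
  have "Rperm_pieces [(2, 0, 1, 0, 1), (1, 0, 1, 0, -1), (1, 1, 1, -1, 1)] tau"
    unfolding Rperm_pieces_def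
    apply (intro conjI)
    subgoal by (rule bij_betw_tau)
    subgoal using cover by simp
    subgoal using disjoint by (simp add: less_Suc_eq all_conj_distrib Int_commute)
    subgoal using tau_on_R_2_0 tau_on_R_1_0 tau_on_R_1_1 by simp
    done
  then show ?thesis unfolding Rperm_def ..
qed

lemma Rperm_tau_inv: "Rperm tau_inv"
proof -
  have cover: "R 2 0 \<union> (R 1 1 \<union> (R 2 1 \<union> R 3 0)) = {1..}"
    using lower_upper_wythoff_cover
    unfolding R_2_0_Un_R_1_1[symmetric] R_2_1_Un_R_3_0[symmetric] by (simp only: Un_assoc)
  have disjoint: "R 2 0 \<inter> R 1 1 = {}" "R 2 0 \<inter> R 2 1 = {}" "R 2 0 \<inter> R 3 0 = {}"
    "R 1 1 \<inter> R 2 1 = {}" "R 1 1 \<inter> R 3 0 = {}" "R 2 1 \<inter> R 3 0 = {}"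
    using R_2_0_Un_R_1_1 R_2_1_Un_R_3_0 R_2_0_Int_R_1_1 R_2_1_Int_R_3_0
      lower_upper_wythoff_disjoint by blast+
  have "Rperm_pieces [(2, 0, 1, 0, 0), (1, 1, 1, 0, 0), (2, 1, 1, -1, 1), (3, 0, 1, -1, 0)] tau_inv"
    unfolding Rperm_pieces_def
    apply (intro conjI)
    subgoal by (rule bij_betw_tau_inv)
    subgoal using cover by simp
    subgoal using disjoint by (simp add: less_Suc_eq all_conj_distrib Int_commute)
    subgoal using tau_inv_on_R_2_0_Un_R_1_1 tau_inv_on_R_2_1 tau_inv_on_R_3_0 by simp
    done
  then show ?thesis unfolding Rperm_def ..
qed

lemma lower_wythoff_values:
  "lower_wythoff 1 = 1" "lower_wythoff 2 = 3" "lower_wythoff 3 = 4"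
  "lower_wythoff 4 = 6" "lower_wythoff 5 = 8" "lower_wythoff 6 = 9"
  by (subst beatty_eq_iff; use phi_bounds in simp)+

lemma upper_wythoff_values:
  "upper_wythoff 1 = 2" "upper_wythoff 2 = 5" "upper_wythoff 3 = 7"
  "upper_wythoff 4 = 10" "upper_wythoff 5 = 13" "upper_wythoff 6 = 15"
  unfolding upper_wythoff_eq lower_wythoff_values by simp_all

lemma tau_values: "map tau [1..<11] = [1, 2, 5, 3, 7, 4, 10, 13, 6, 15]"
proof -
  note wythoff_values = lower_wythoff_values upper_wythoff_values
  have "tau 1 = 1" using tau_lower_lower[of 1] wythoff_values by simp
  moreover have "tau 2 = 2" using tau_upper[of 1] wythoff_values by simp
  moreover have "tau 3 = 5" using tau_lower_upper[of 1] wythoff_values by simp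
  moreover have "tau 4 = 3" using tau_lower_lower[of 2] wythoff_values by simp
  moreover have "tau 5 = 7" using tau_upper[of 2] wythoff_values by simp
  moreover have "tau 6 = 4" using tau_lower_lower[of 3] wythoff_values by simp
  moreover have "tau 7 = 10" using tau_upper[of 3] wythoff_values by simp
  moreover have "tau 8 = 13" using tau_lower_upper[of 2] wythoff_values by simp
  moreover have "tau 9 = 6" using tau_lower_lower[of 4] wythoff_values by simp
  moreover have "tau 10 = 15" using tau_upper[of 4] wythoff_values by simp
  ultimately show ?thesis by (simp add: upt_rec numeral_eq_Suc)
qed

theorem theorem4p5:
  shows "Rperm tau \<and> map tau [1..<11] = [1,2,5,3,7,4,10,13,6,15] \<and>
         Rperm tau_inv \<and>
         (\<forall>n\<ge>1. tau_inv (tau n) = n \<and> tau (tau_inv n) = n)"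
  using Rperm_tau tau_values Rperm_tau_inv tau_inverse tau_inv_inverse by blast

end
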